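(* Let $\{(G_n,\Psi_n,\varphi^L_n,\varphi^U_n)\}_{n\ge0}$ be an $\mathcal{F}$-system (with $\varphi^L_n<\varphi^U_n$ on $G_n$) satisfying Condition $\Gamma$, with induced Cantor system $(X,H_X)$ and associated fence $\mathbf{F}_\Phi$. Then there exists a continuous surjection $T:\mathbf{F}_\Phi\to\mathbf{F}_\Phi$, having $H_X$ as a factor, given by $T(x,t)=(H_X(x),s(x,t))$. Moreover, if the system additionally satisfies Condition $\Gamma^+$ and $H_X$ is a homeomorphism of $X$, then $T$ is a homeomorphism of $\mathbf{F}_\Phi$.
   Context: An $\mathcal{F}$-system consists of: finite directed graphs $G_n$ ($n\ge0$), each vertex having at least one outgoing and one incoming edge; surjective maps $\Psi_n:G_{n+1}\to G_n$ sending edges to edges; such that (i) for each $n$ and $v\in G_n$ there are $m>n$ and distinct $v',v''\in G_{m+1}$ with $\Psi_n\circ\cdots\circ\Psi_m(v')=\Psi_n\circ\cdots\circ\Psi_m(v'')=v$; (ii) for every $m$ there is $n>m$ such that for every $g\in G_n$ the set $\{\Psi_m\circ\cdots\circ\Psi_{n-1}(g'):\overrightarrow{gg'}\in G_n\}$ has exactly one element; and maps $\varphi^L_n,\varphi^U_n:G_n\to[0,1]$ with $\varphi^L_n\le\varphi^U_n$, $\varphi^U_{n+1}(v')\le\varphi^U_n(\Psi_n(v'))$, $\varphi^L_{n+1}(v')\ge\varphi^L_n(\Psi_n(v'))$, and such that for every $g\in G_n$ there is $g'\in G_{n+1}$ with $\Psi_n(g')=g$, $\varphi^L_{n+1}(g')=\varphi^L_n(g)$,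 $\varphi^U_{n+1}(g')=\varphi^U_n(g)$. $X=\{x\in\prod_n G_n: x(n)=\Psi_n(x(n+1))\ \forall n\}$; $H_X:X\to X$ is the continuous surjection whose graph is $\{(x,y)\in X^2:\overrightarrow{x(n)y(n)}\in G_n\ \forall n\}$. $\varphi^U(x)=\lim_n\varphi^U_n(x(n))$, $\varphi^L(x)=\lim_n\varphi^L_n(x(n))$, $\Phi=(\varphi^L,\varphi^U)$, $\mathbf{F}_\Phi=\{(x,t)\in X\times[0,1]:\varphi^L(x)\le t\le\varphi^U(x)\}$. "Having $H_X$ as a factor" means $\pi\circ T=H_X\circ\pi$ for $\pi(x,t)=x$. For $u,v\in G_n$ let $s_n(u,v)$ be the increasing affine map of $[\varphi^L_n(u),\varphi^U_n(u)]$ onto $[\varphi^L_n(v),\varphi^U_n(v)]$: $s_n(u,v)(t)=\frac{\varphi^U_n(v)-\varphi^L_n(v)}{\varphi^U_n(u)-\varphi^L_n(u)}(t-\varphi^L_n(u))+\varphi^L_n(v)$. For an edge $\overrightarrow{uv}\in G_n$: $\Gamma_n(\overrightarrow{uv})=\max\{|s_n(u,v)(t)-s_{n+1}(u',v')(t)| : \overrightarrow{u'v'}\in G_{n+1},\Psi_n(u')=u,\Psi_n(v')=v,\ t\in[\varphi^L_{n+1}(u'),\varphi^U_{n+1}(u')]\}$ and $\Gamma^+_n(\overrightarrow{uv})=\max\{|s_n(v,u)(t)-s_{n+1}(v',u')(t)| : \overrightarrow{u'v'}\in G_{n+1},\Psi_n(u')=u,\Psi_n(v')=v,\ t\in[\varphi^L_{n+1}(v'),\varphi^U_{n+1}(v')]\}$;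 $\Gamma_n=\max\Gamma_n(\overrightarrow{uv})$, $\Gamma^+_n=\max\Gamma^+_n(\overrightarrow{uv})$. Condition $\Gamma$: $\sum_n\Gamma_n<\infty$; Condition $\Gamma^+$: $\sum_n\Gamma^+_n<\infty$. Finally $s:\mathbf{F}_\Phi\to\mathbb{R}$, $s(x,t)=\lim_n s_n(x(n),H_X(x)(n))(t)$ (the limit exists uniformly under Condition $\Gamma$). *)

theory Defs
  imports "HOL-Analysis.Analysis"
begin

text \<open>An F-system is given by: vertex sets V n, edge sets E n (pairs of vertices),
 bonding maps Psi n (from level Suc n to level n), and maps phiL n, phiU n.
 All levels share one ambient vertex type 'a.\<close>

text \<open>psi_comp Psi n d maps level n+d to level n: it is Psi n o ... o Psi (n+d-1).\<close>
fun psi_comp :: "(nat \<Rightarrow> 'a \<Rightarrow> 'a) \<Rightarrow> nat \<Rightarrow> nat \<Rightarrow> 'a \<Rightarrow> 'a" where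
  "psi_comp Psi n 0 = id"
| "psi_comp Psi n (Suc d) = psi_comp Psi n d \<circ> Psi (n + d)"

definition F_system ::
  "(nat \<Rightarrow> 'a set) \<Rightarrow> (nat \<Rightarrow> ('a \<times> 'a) set) \<Rightarrow> (nat \<Rightarrow> 'a \<Rightarrow> 'a)
   \<Rightarrow> (nat \<Rightarrow> 'a \<Rightarrow> real) \<Rightarrow> (nat \<Rightarrow> 'a \<Rightarrow> real) \<Rightarrow> bool" where
  "F_system V E Psi phiL phiU \<longleftrightarrow>
     (\<forall>n. finite (V n) \<and> E n \<subseteq> V n \<times> V n)
   \<and> (\<forall>n. \<forall>v\<in>V n. (\<exists>w. (v, w) \<in> E n) \<and> (\<exists>w. (w, v) \<in> E n))
   \<and> (\<forall>n. Psi n ` V (Suc n) = V n)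
   \<and> (\<forall>n. (\<lambda>(u, v). (Psi n u, Psi n v)) ` E (Suc n) = E n)
   \<and> (\<forall>n. \<forall>v\<in>V n. \<exists>m>n. \<exists>v'\<in>V (Suc m). \<exists>v''\<in>V (Suc m). v' \<noteq> v'' \<and>
          psi_comp Psi n (Suc m - n) v' = v \<and> psi_comp Psi n (Suc m - n) v'' = v)
   \<and> (\<forall>m. \<exists>n>m. \<forall>g\<in>V n. card {psi_comp Psi m (n - m) g' | g'. (g, g') \<in> E n} = 1)
   \<and> (\<forall>n. \<forall>v\<in>V n. 0 \<le> phiL n v \<and> phiL n v \<le> phiU n v \<and> phiU n v \<le> 1)
   \<and> (\<forall>n. \<forall>v'\<in>V (Suc n). phiU (Suc n) v' \<le> phiU n (Psi n v')
                          \<and> phiL (Suc n) v' \<ge> phiL n (Psi n v'))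
   \<and> (\<forall>n. \<forall>g\<in>V n. \<exists>g'\<in>V (Suc n). Psi n g' = g \<and> phiL (Suc n) g' = phiL n g
                          \<and> phiU (Suc n) g' = phiU n g)"

definition cantor_X :: "(nat \<Rightarrow> 'a set) \<Rightarrow> (nat \<Rightarrow> 'a \<Rightarrow> 'a) \<Rightarrow> (nat \<Rightarrow> 'a) set" where
  "cantor_X V Psi = {x. \<forall>n. x n \<in> V n \<and> x n = Psi n (x (Suc n))}"

definition X_top :: "(nat \<Rightarrow> 'a set) \<Rightarrow> (nat \<Rightarrow> 'a \<Rightarrow> 'a) \<Rightarrow> (nat \<Rightarrow> 'a) topology" where
  "X_top V Psi = subtopology (product_topology (\<lambda>n. discrete_topology (V n)) UNIV) (cantor_X V Psi)"

definition H_X :: "(nat \<Rightarrow> 'a set) \<Rightarrow> (nat \<Rightarrow> ('a \<times> 'a) set) \<Rightarrow> (nat \<Rightarrow> 'a \<Rightarrow> 'a)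
                   \<Rightarrow> (nat \<Rightarrow> 'a) \<Rightarrow> (nat \<Rightarrow> 'a)" where
  "H_X V E Psi x = (THE y. y \<in> cantor_X V Psi \<and> (\<forall>n. (x n, y n) \<in> E n))"

definition phiU_lim :: "(nat \<Rightarrow> 'a \<Rightarrow> real) \<Rightarrow> (nat \<Rightarrow> 'a) \<Rightarrow> real" where
  "phiU_lim phiU x = lim (\<lambda>n. phiU n (x n))"

definition phiL_lim :: "(nat \<Rightarrow> 'a \<Rightarrow> real) \<Rightarrow> (nat \<Rightarrow> 'a) \<Rightarrow> real" where
  "phiL_lim phiL x = lim (\<lambda>n. phiL n (x n))"

definition fence :: "(nat \<Rightarrow> 'a set) \<Rightarrow> (nat \<Rightarrow> 'a \<Rightarrow> 'a) \<Rightarrow> (nat \<Rightarrow> 'a \<Rightarrow> real)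
                     \<Rightarrow> (nat \<Rightarrow> 'a \<Rightarrow> real) \<Rightarrow> ((nat \<Rightarrow> 'a) \<times> real) set" where
  "fence V Psi phiL phiU =
     {(x, t). x \<in> cantor_X V Psi \<and> phiL_lim phiL x \<le> t \<and> t \<le> phiU_lim phiU x}"

definition fence_top :: "(nat \<Rightarrow> 'a set) \<Rightarrow> (nat \<Rightarrow> 'a \<Rightarrow> 'a) \<Rightarrow> (nat \<Rightarrow> 'a \<Rightarrow> real)
                     \<Rightarrow> (nat \<Rightarrow> 'a \<Rightarrow> real) \<Rightarrow> ((nat \<Rightarrow> 'a) \<times> real) topology" where
  "fence_top V Psi phiL phiU =
     subtopology (prod_topology (X_top V Psi) euclideanreal) (fence V Psi phiL phiU)"

text \<open>s_n(u,v): increasing affine map of [phiL_n u, phiU_n u] onto [phiL_n v, phiU_n v].\<close>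
definition s_n :: "(nat \<Rightarrow> 'a \<Rightarrow> real) \<Rightarrow> (nat \<Rightarrow> 'a \<Rightarrow> real) \<Rightarrow> nat \<Rightarrow> 'a \<Rightarrow> 'a \<Rightarrow> real \<Rightarrow> real" where
  "s_n phiL phiU n u v t =
     (phiU n v - phiL n v) / (phiU n u - phiL n u) * (t - phiL n u) + phiL n v"

definition Gamma_edge :: "(nat \<Rightarrow> ('a \<times> 'a) set) \<Rightarrow> (nat \<Rightarrow> 'a \<Rightarrow> 'a)
     \<Rightarrow> (nat \<Rightarrow> 'a \<Rightarrow> real) \<Rightarrow> (nat \<Rightarrow> 'a \<Rightarrow> real) \<Rightarrow> nat \<Rightarrow> 'a \<times> 'a \<Rightarrow> real" where
  "Gamma_edge E Psi phiL phiU n e =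
     Sup {\<bar>s_n phiL phiU n (fst e) (snd e) t - s_n phiL phiU (Suc n) u' v' t\<bar> | u' v' t.
            (u', v') \<in> E (Suc n) \<and> Psi n u' = fst e \<and> Psi n v' = snd e
            \<and> phiL (Suc n) u' \<le> t \<and> t \<le> phiU (Suc n) u'}"

definition Gamma_plus_edge :: "(nat \<Rightarrow> ('a \<times> 'a) set) \<Rightarrow> (nat \<Rightarrow> 'a \<Rightarrow> 'a)
     \<Rightarrow> (nat \<Rightarrow> 'a \<Rightarrow> real) \<Rightarrow> (nat \<Rightarrow> 'a \<Rightarrow> real) \<Rightarrow> nat \<Rightarrow> 'a \<times> 'a \<Rightarrow> real" where
  "Gamma_plus_edge E Psi phiL phiU n e =
     Sup {\<bar>s_n phiL phiU n (snd e) (fst e) t - s_n phiL phiU (Suc n) v' u' t\<bar> | u' v' t.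
            (u', v') \<in> E (Suc n) \<and> Psi n u' = fst e \<and> Psi n v' = snd e
            \<and> phiL (Suc n) v' \<le> t \<and> t \<le> phiU (Suc n) v'}"

definition Gamma :: "(nat \<Rightarrow> ('a \<times> 'a) set) \<Rightarrow> (nat \<Rightarrow> 'a \<Rightarrow> 'a)
     \<Rightarrow> (nat \<Rightarrow> 'a \<Rightarrow> real) \<Rightarrow> (nat \<Rightarrow> 'a \<Rightarrow> real) \<Rightarrow> nat \<Rightarrow> real" where
  "Gamma E Psi phiL phiU n = Max (Gamma_edge E Psi phiL phiU n ` E n)"

definition Gamma_plus :: "(nat \<Rightarrow> ('a \<times> 'a) set) \<Rightarrow> (nat \<Rightarrow> 'a \<Rightarrow> 'a)
     \<Rightarrow> (nat \<Rightarrow> 'a \<Rightarrow> real) \<Rightarrow> (nat \<Rightarrow> 'a \<Rightarrow> real) \<Rightarrow> nat \<Rightarrow> real" where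
  "Gamma_plus E Psi phiL phiU n = Max (Gamma_plus_edge E Psi phiL phiU n ` E n)"

definition condition_Gamma where
  "condition_Gamma E Psi phiL phiU \<longleftrightarrow> summable (Gamma E Psi phiL phiU)"

definition condition_Gamma_plus where
  "condition_Gamma_plus E Psi phiL phiU \<longleftrightarrow> summable (Gamma_plus E Psi phiL phiU)"

definition s_lim :: "(nat \<Rightarrow> 'a set) \<Rightarrow> (nat \<Rightarrow> ('a \<times> 'a) set) \<Rightarrow> (nat \<Rightarrow> 'a \<Rightarrow> 'a)
     \<Rightarrow> (nat \<Rightarrow> 'a \<Rightarrow> real) \<Rightarrow> (nat \<Rightarrow> 'a \<Rightarrow> real) \<Rightarrow> (nat \<Rightarrow> 'a) \<Rightarrow> real \<Rightarrow> real" where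
  "s_lim V E Psi phiL phiU x t = lim (\<lambda>n. s_n phiL phiU n (x n) (H_X V E Psi x n) t)"

end

theory Submission
  imports Defs
begin

text \<open>
  Condition (ii) of an \<open>\<F>\<close>-system makes successors of threads unique, and Koenig's lemma for
  the finite levels makes them exist, so \<open>H\<^sub>X\<close> is well defined, onto, and each coordinate
  of \<open>H\<^sub>X x\<close> depends on a single coordinate of \<open>x\<close>, whence continuity.
  On the fibre over \<open>x\<close> consecutive affine maps \<open>s\<^sub>n(x(n), H\<^sub>X x(n))\<close> differ by at most
  \<open>\<Gamma>\<^sub>n\<close>, so under Condition \<open>\<Gamma>\<close> they converge uniformly on the fence. The limit \<open>s\<close> is
  therefore continuous, maps the fibre over \<open>x\<close> into the fibre over \<open>H\<^sub>X x\<close> and sends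
  endpoints to endpoints, and the intermediate value theorem makes \<open>T\<close> onto.
  Condition \<open>\<Gamma>\<^sup>+\<close> is Condition \<open>\<Gamma>\<close> for the reversed graphs, so the inverse affine maps
  \<open>s\<^sub>n(H\<^sub>X x(n), x(n))\<close> also converge and recover \<open>t\<close> from \<open>s(x, t)\<close>: \<open>T\<close> is injective
  when \<open>H\<^sub>X\<close> is, and a continuous bijection of the compact Hausdorff fence is a homeomorphism.
\<close>

section \<open>Inverse sequences of finite sets\<close>

lemma psi_comp_Suc_left: "psi_comp Psi n (Suc m) v = Psi n (psi_comp Psi (Suc n) m v)"
  by (induction m arbitrary: v) simp_all

lemma cantor_X_iff: "x \<in> cantor_X V Psi \<longleftrightarrow> (\<forall>n. x n \<in> V n \<and> Psi n (x (Suc n)) = x n)"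
  unfolding cantor_X_def by (simp add: eq_commute)

lemma cantor_X_in_V: "x \<in> cantor_X V Psi \<Longrightarrow> x n \<in> V n"
  by (simp add: cantor_X_iff)

lemma cantor_X_Psi: "x \<in> cantor_X V Psi \<Longrightarrow> Psi n (x (Suc n)) = x n"
  by (simp add: cantor_X_iff)

lemma psi_comp_cantor_X: "x \<in> cantor_X V Psi \<Longrightarrow> psi_comp Psi n m (x (n + m)) = x n"
  by (induction m) (simp_all add: cantor_X_Psi)

lemma decseq_finite_Inter_nonempty:
  assumes dec: "decseq A" and ne: "\<And>m. A m \<noteq> {}" and fin: "finite (A 0)"
  shows "(\<Inter>m. A m) \<noteq> {}"
proof
  assume "(\<Inter>m. A m) = {}"
  then have "\<forall>a. \<exists>m. a \<notin> A m" by blast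
  then obtain f where f: "\<And>a. a \<notin> A (f a)" by metis
  define M where "M = Max (f ` A 0)"
  obtain a where a: "a \<in> A M" using ne by blast
  then have "a \<in> A 0" using dec by (auto simp: decseq_def)
  then have "f a \<le> M" unfolding M_def using fin by simp
  then show False using a f dec by (auto simp: decseq_def)
qed

lemma cantor_X_nonempty:
  assumes fin: "\<And>n. finite (B n)" and ne: "\<And>n. B n \<noteq> {}"
    and maps: "\<And>n. Psi n ` B (Suc n) \<subseteq> B n"
  shows "cantor_X B Psi \<noteq> {}"
proof -
  have dec: "decseq (\<lambda>m. psi_comp Psi n m ` B (n + m))" for n
  proof (rule decseq_SucI)
    fix m
    have "psi_comp Psi n (Suc m) ` B (n + Suc m) = psi_comp Psi n m ` Psi (n + m) ` B (Suc (n + m))"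
      by (simp add: image_comp)
    also have "\<dots> \<subseteq> psi_comp Psi n m ` B (n + m)"
      using maps by (intro image_mono) auto
    finally show "psi_comp Psi n (Suc m) ` B (n + Suc m) \<subseteq> psi_comp Psi n m ` B (n + m)" .
  qed
  txt \<open>The eventual images \<open>D n\<close> are nonempty by finiteness, and \<open>Psi n\<close> maps
    \<open>D (Suc n)\<close> onto \<open>D n\<close>, so a thread through them can be chosen level by level.\<close>
  define D where "D n = (\<Inter>m. psi_comp Psi n m ` B (n + m))" for n
  have D_ne: "D n \<noteq> {}" for n
    unfolding D_def using dec fin ne by (intro decseq_finite_Inter_nonempty) auto
  have D_B: "D n \<subseteq> B n" for n
  proof
    fix d assume "d \<in> D n"
    then have "d \<in> psi_comp Psi n 0 ` B (n + 0)" unfolding D_def by blast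
    then show "d \<in> B n" by simp
  qed
  have lift: "\<exists>d'. d' \<in> D (Suc n) \<and> Psi n d' = d" if d: "d \<in> D n" for n d
  proof -
    define A where "A m = {d' \<in> psi_comp Psi (Suc n) m ` B (Suc n + m). Psi n d' = d}" for m
    have "decseq A"
      using dec[of "Suc n"] unfolding A_def by (auto simp: decseq_Suc_iff)
    moreover have "A m \<noteq> {}" for m
    proof -
      have "d \<in> psi_comp Psi n (Suc m) ` B (n + Suc m)" using d unfolding D_def by blast
      then obtain b where "b \<in> B (Suc n + m)" "d = psi_comp Psi n (Suc m) b" by auto
      then show ?thesis unfolding A_def psi_comp_Suc_left by blast
    qed
    moreover have "finite (A 0)" unfolding A_def using fin by simp
    ultimately have "(\<Inter>m. A m) \<noteq> {}" by (rule decseq_finite_Inter_nonempty)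
    then obtain d' where "\<forall>m. d' \<in> A m" by blast
    then have "d' \<in> D (Suc n)" and "Psi n d' = d" unfolding A_def D_def by auto
    then show ?thesis by blast
  qed
  have "\<exists>x. \<forall>n. x n \<in> D n \<and> Psi n (x (Suc n)) = x n"
  proof (rule dependent_nat_choice)
    show "\<exists>d. d \<in> D 0" using D_ne by blast
  qed (rule lift)
  then obtain x where x: "\<And>n. x n \<in> D n" "\<And>n. Psi n (x (Suc n)) = x n" by blast
  have "x \<in> cantor_X B Psi" using x D_B by (auto simp: cantor_X_iff)
  then show ?thesis by blast
qed

section \<open>Affine maps between fibres\<close>

lemma s_n_in_interval:
  assumes u: "phiL n u < phiU n u" and v: "phiL n v \<le> phiU n v"
    and t: "phiL n u \<le> t" "t \<le> phiU n u"
  shows "phiL n v \<le> s_n phiL phiU n u v t \<and> s_n phiL phiU n u v t \<le> phiU n v"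
proof -
  define q where "q = (t - phiL n u) / (phiU n u - phiL n u)"
  have "0 \<le> q" "q \<le> 1" unfolding q_def using u t by auto
  moreover have "s_n phiL phiU n u v t = (phiU n v - phiL n v) * q + phiL n v"
    unfolding s_n_def q_def by simp
  ultimately show ?thesis using v mult_left_le[of q "phiU n v - phiL n v"] by auto
qed

lemma s_n_phiL: "s_n phiL phiU n u v (phiL n u) = phiL n v"
  by (simp add: s_n_def)

lemma s_n_phiU: "phiL n u \<noteq> phiU n u \<Longrightarrow> s_n phiL phiU n u v (phiU n u) = phiU n v"
  by (simp add: s_n_def)

lemma s_n_swap_inverse:
  assumes "phiL n u \<noteq> phiU n u" and "phiL n v \<noteq> phiU n v"
  shows "s_n phiL phiU n v u (s_n phiL phiU n u v t) = t"
proof -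
  have "(phiU n u - phiL n u) / (phiU n v - phiL n v) * ((phiU n v - phiL n v) / (phiU n u - phiL n u)) = 1"
    using assms by simp
  then have "(phiU n u - phiL n u) / (phiU n v - phiL n v)
      * ((phiU n v - phiL n v) / (phiU n u - phiL n u) * (t - phiL n u)) = t - phiL n u"
    by (metis mult.assoc mult_1)
  then show ?thesis unfolding s_n_def by simp
qed

lemma tendsto_s_n: "f \<longlonglongrightarrow> l \<Longrightarrow> (\<lambda>m. s_n phiL phiU n u v (f m)) \<longlonglongrightarrow> s_n phiL phiU n u v l"
  unfolding s_n_def by (intro tendsto_intros)

lemma Gamma_plus_eq_Gamma_converse:
  "Gamma_plus E Psi phiL phiU = Gamma (\<lambda>n. (E n)\<inverse>) Psi phiL phiU"
proof
  fix n
  have swap: "Gamma_plus_edge E Psi phiL phiU n (u, v)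
      = Gamma_edge (\<lambda>n. (E n)\<inverse>) Psi phiL phiU n (v, u)" for u v
    unfolding Gamma_plus_edge_def Gamma_edge_def by (rule arg_cong[where f = Sup]) auto
  have "Gamma_plus_edge E Psi phiL phiU n ` E n
      = Gamma_edge (\<lambda>n. (E n)\<inverse>) Psi phiL phiU n ` (E n)\<inverse>"
    by (force simp: swap)
  then show "Gamma_plus E Psi phiL phiU n = Gamma (\<lambda>n. (E n)\<inverse>) Psi phiL phiU n"
    unfolding Gamma_plus_def Gamma_def by simp
qed

section \<open>Telescoping limits\<close>

lemma telescoping_tail_bound:
  fixes f :: "nat \<Rightarrow> real \<Rightarrow> real" and lo hi g :: "nat \<Rightarrow> real"
  assumes lo: "incseq lo" and hi: "decseq hi"
    and step: "\<And>n t. lo (Suc n) \<le> t \<Longrightarrow> t \<le> hi (Suc n) \<Longrightarrow> \<bar>f n t - f (Suc n) t\<bar> \<le> g n"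
    and g: "summable g" "\<And>n. 0 \<le> g n"
    and km: "k \<le> m" and t: "lo m \<le> t" "t \<le> hi m"
  shows "\<bar>f k t - f m t\<bar> \<le> (\<Sum>j. g (j + k))"
proof -
  have "\<bar>f k t - f m t\<bar> \<le> sum g {k..<m}"
    using km t
  proof (induction m)
    case (Suc m)
    show ?case
    proof (cases "k = Suc m")
      case False
      then have "k \<le> m" using Suc.prems by simp
      moreover have "lo m \<le> t" "t \<le> hi m"
        using Suc.prems monoD[OF lo, of m "Suc m"] antimonoD[OF hi, of m "Suc m"] by auto
      ultimately have "\<bar>f k t - f m t\<bar> \<le> sum g {k..<m}" using Suc.IH by blast
      moreover have "\<bar>f m t - f (Suc m) t\<bar> \<le> g m" using step Suc.prems by blast
      ultimately show ?thesis using \<open>k \<le> m\<close> by simp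
    qed simp
  qed simp
  also have "\<dots> = (\<Sum>j = 0..<m - k. g (j + k))"
    using sum.shift_bounds_nat_ivl[of g 0 k "m - k"] km by simp
  also have "\<dots> \<le> (\<Sum>j. g (j + k))"
    using g by (intro sum_le_suminf) (auto simp: summable_iff_shift)
  finally show ?thesis .
qed

lemma convergent_if_tail_bounded:
  fixes a R :: "nat \<Rightarrow> real"
  assumes bound: "\<And>k m. k \<le> m \<Longrightarrow> \<bar>a k - a m\<bar> \<le> R k" and R: "R \<longlonglongrightarrow> 0"
  shows "a \<longlonglongrightarrow> lim a" and "\<bar>a k - lim a\<bar> \<le> R k"
proof -
  have "Cauchy a"
  proof (rule CauchyI)
    fix e :: real assume "e > 0"
    then obtain M where M: "R M < e / 2"
      using order_tendstoD(2)[OF R, of "e / 2"] by (auto simp: eventually_sequentially)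
    have "\<bar>a m - a n\<bar> < e" if "M \<le> m" "M \<le> n" for m n
      using bound[OF that(1)] bound[OF that(2)] M by linarith
    then show "\<exists>M. \<forall>m\<ge>M. \<forall>n\<ge>M. norm (a m - a n) < e" by auto
  qed
  then show lim: "a \<longlonglongrightarrow> lim a" by (simp add: Cauchy_convergent_iff convergent_LIMSEQ_iff)
  show "\<bar>a k - lim a\<bar> \<le> R k"
    by (rule LIMSEQ_le_const2[OF tendsto_rabs[OF tendsto_diff[OF tendsto_const lim]]])
       (use bound in blast)
qed

section \<open>The Cantor system and its fence\<close>

lemma closedin_continuous_maps_le:
  assumes "continuous_map T euclideanreal f" and "continuous_map T euclideanreal g"
  shows "closedin T {p \<in> topspace T. f p \<le> g p}"
  using closedin_continuous_map_preimage[OF continuous_map_diff[OF assms(2,1)], of "{0..}"]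
  by (simp add: closed_closedin[symmetric])

locale strict_F_system =
  fixes V :: "nat \<Rightarrow> 'a set" and E :: "nat \<Rightarrow> ('a \<times> 'a) set"
    and Psi :: "nat \<Rightarrow> 'a \<Rightarrow> 'a" and phiL phiU :: "nat \<Rightarrow> 'a \<Rightarrow> real"
  assumes F_system: "F_system V E Psi phiL phiU"
    and phiL_less_phiU: "\<And>n v. v \<in> V n \<Longrightarrow> phiL n v < phiU n v"
begin

abbreviation "X \<equiv> cantor_X V Psi"
abbreviation "H \<equiv> H_X V E Psi"
abbreviation "Fence \<equiv> fence V Psi phiL phiU"

lemma finite_V: "finite (V n)"
  using F_system by (simp add: F_system_def)

lemma edges_subset: "E n \<subseteq> V n \<times> V n"
  using F_system by (simp add: F_system_def)

lemma out_edge: "v \<in> V n \<Longrightarrow> \<exists>w. (v, w) \<in> E n"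
  using F_system by (simp add: F_system_def)

lemma in_edge: "v \<in> V n \<Longrightarrow> \<exists>w. (w, v) \<in> E n"
  using F_system by (simp add: F_system_def)

lemma Psi_image_V: "Psi n ` V (Suc n) = V n"
  using F_system by (simp add: F_system_def)

lemma Psi_image_E: "(\<lambda>(u, v). (Psi n u, Psi n v)) ` E (Suc n) = E n"
  using F_system by (simp add: F_system_def)

lemma Psi_edge: "(u, v) \<in> E (Suc n) \<Longrightarrow> (Psi n u, Psi n v) \<in> E n"
  using Psi_image_E[of n] by force

lemma phi_bounds: "v \<in> V n \<Longrightarrow> 0 \<le> phiL n v \<and> phiL n v \<le> phiU n v \<and> phiU n v \<le> 1"
  using F_system by (simp add: F_system_def)

lemma phi_mono:
  "v \<in> V (Suc n) \<Longrightarrow> phiL n (Psi n v) \<le> phiL (Suc n) v \<and> phiU (Suc n) v \<le> phiU n (Psi n v)"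
  using F_system by (simp add: F_system_def)

lemma successors_eventually_determined:
  "\<exists>n>m. \<forall>g\<in>V n. \<forall>y\<in>X. \<forall>y'\<in>X. (g, y n) \<in> E n \<longrightarrow> (g, y' n) \<in> E n \<longrightarrow> y m = y' m"
proof -
  have "\<exists>n>m. \<forall>g\<in>V n. card {psi_comp Psi m (n - m) g' | g'. (g, g') \<in> E n} = 1"
    using F_system by (simp add: F_system_def)
  then obtain n where "m < n"
    and card: "\<And>g. g \<in> V n \<Longrightarrow> card {psi_comp Psi m (n - m) g' | g'. (g, g') \<in> E n} = 1"
    by blast
  have "y m = y' m"
    if g: "g \<in> V n" and yy': "y \<in> X" "y' \<in> X" "(g, y n) \<in> E n" "(g, y' n) \<in> E n" for g y y'
  proof -
    obtain a where a: "{psi_comp Psi m (n - m) g' | g'. (g, g') \<in> E n} = {a}"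
      using card[OF g] by (rule card_1_singletonE)
    have "z m \<in> {a}" if "z \<in> X" "(g, z n) \<in> E n" for z
      unfolding a[symmetric]
      using psi_comp_cantor_X[OF that(1), of m "n - m"] \<open>m < n\<close> that(2) by force
    then show ?thesis using yy' by (metis singletonD)
  qed
  then show ?thesis using \<open>m < n\<close> by blast
qed

lemma thread_exists:
  assumes "\<And>n. B n \<subseteq> V n" and "\<And>n. B n \<noteq> {}" and "\<And>n. Psi n ` B (Suc n) \<subseteq> B n"
  shows "\<exists>y\<in>X. \<forall>n. y n \<in> B n"
proof -
  have "finite (B n)" for n using assms(1) finite_V by (rule finite_subset)
  then have "cantor_X B Psi \<noteq> {}" using assms(2,3) by (rule cantor_X_nonempty)
  then obtain y where "y \<in> cantor_X B Psi" by blast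
  then have "y \<in> X" and "\<forall>n. y n \<in> B n" using assms(1) by (auto simp: cantor_X_iff)
  then show ?thesis by blast
qed

lemma successor_exists:
  assumes x: "x \<in> X" shows "\<exists>y\<in>X. \<forall>n. (x n, y n) \<in> E n"
proof -
  have "\<exists>y\<in>X. \<forall>n. y n \<in> {w. (x n, w) \<in> E n}"
  proof (rule thread_exists)
    show "{w. (x n, w) \<in> E n} \<subseteq> V n" for n using edges_subset by blast
    show "{w. (x n, w) \<in> E n} \<noteq> {}" for n using out_edge[OF cantor_X_in_V[OF x]] by blast
    show "Psi n ` {w. (x (Suc n), w) \<in> E (Suc n)} \<subseteq> {w. (x n, w) \<in> E n}" for n
      using Psi_edge[of "x (Suc n)" _ n] cantor_X_Psi[OF x, of n] by auto
  qed
  then show ?thesis by simp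
qed

lemma predecessor_exists:
  assumes y: "y \<in> X" shows "\<exists>x\<in>X. \<forall>n. (x n, y n) \<in> E n"
proof -
  have "\<exists>x\<in>X. \<forall>n. x n \<in> {w. (w, y n) \<in> E n}"
  proof (rule thread_exists)
    show "{w. (w, y n) \<in> E n} \<subseteq> V n" for n using edges_subset by blast
    show "{w. (w, y n) \<in> E n} \<noteq> {}" for n using in_edge[OF cantor_X_in_V[OF y]] by blast
    show "Psi n ` {w. (w, y (Suc n)) \<in> E (Suc n)} \<subseteq> {w. (w, y n) \<in> E n}" for n
      using Psi_edge[of _ "y (Suc n)" n] cantor_X_Psi[OF y, of n] by auto
  qed
  then show ?thesis by simp
qed

lemma successor_unique:
  assumes "x \<in> X" "y \<in> X" "y' \<in> X" "\<And>n. (x n, y n) \<in> E n" "\<And>n. (x n, y' n) \<in> E n"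
  shows "y = y'"
proof
  fix m
  obtain n where
    "\<forall>g\<in>V n. \<forall>y\<in>X. \<forall>y'\<in>X. (g, y n) \<in> E n \<longrightarrow> (g, y' n) \<in> E n \<longrightarrow> y m = y' m"
    using successors_eventually_determined[of m] by blast
  then show "y m = y' m" using assms cantor_X_in_V by blast
qed

lemma H_eqI:
  assumes x: "x \<in> X" and y: "y \<in> X" "\<And>n. (x n, y n) \<in> E n"
  shows "H x = y"
proof (unfold H_X_def, rule the_equality)
  show "y \<in> X \<and> (\<forall>n. (x n, y n) \<in> E n)" using y by blast
  show "z = y" if "z \<in> X \<and> (\<forall>n. (x n, z n) \<in> E n)" for z
    using successor_unique[OF x, of z y] that y by blast
qed

lemma H_in_X_edge:
  assumes x: "x \<in> X" shows "H x \<in> X \<and> (\<forall>n. (x n, H x n) \<in> E n)"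
proof -
  obtain y where y: "y \<in> X" "\<forall>n. (x n, y n) \<in> E n" using successor_exists[OF x] by blast
  with H_eqI[OF x y(1)] show ?thesis by simp
qed

lemma H_in_X: "x \<in> X \<Longrightarrow> H x \<in> X"
  using H_in_X_edge by blast

lemma H_edge: "x \<in> X \<Longrightarrow> (x n, H x n) \<in> E n"
  using H_in_X_edge by blast

lemma H_image: "H ` X = X"
proof
  show "H ` X \<subseteq> X" using H_in_X by blast
  show "X \<subseteq> H ` X"
  proof
    fix y assume y: "y \<in> X"
    then obtain x where x: "x \<in> X" "\<forall>n. (x n, y n) \<in> E n" using predecessor_exists by blast
    with H_eqI[OF x(1) y] show "y \<in> H ` X" by blast
  qed
qed

lemma phiL_incseq: "x \<in> X \<Longrightarrow> incseq (\<lambda>n. phiL n (x n))"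
  using phi_mono cantor_X_in_V cantor_X_Psi by (metis incseq_SucI)

lemma phiU_decseq: "x \<in> X \<Longrightarrow> decseq (\<lambda>n. phiU n (x n))"
  using phi_mono cantor_X_in_V cantor_X_Psi by (metis decseq_SucI)

lemma phiL_tendsto:
  assumes x: "x \<in> X" shows "(\<lambda>n. phiL n (x n)) \<longlonglongrightarrow> phiL_lim phiL x"
proof -
  have "bdd_above (range (\<lambda>n. phiL n (x n)))"
    using phi_bounds[OF cantor_X_in_V[OF x]] by (intro bdd_aboveI2[where M = 1]) (meson order_trans)
  then have "(\<lambda>n. phiL n (x n)) \<longlonglongrightarrow> (SUP n. phiL n (x n))"
    by (rule LIMSEQ_incseq_SUP[OF _ phiL_incseq[OF x]])
  then show ?thesis unfolding phiL_lim_def by (metis limI)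
qed

lemma phiU_tendsto:
  assumes x: "x \<in> X" shows "(\<lambda>n. phiU n (x n)) \<longlonglongrightarrow> phiU_lim phiU x"
proof -
  have "bdd_below (range (\<lambda>n. phiU n (x n)))"
    using phi_bounds[OF cantor_X_in_V[OF x]] by (intro bdd_belowI2[where m = 0]) (meson order_trans)
  then have "(\<lambda>n. phiU n (x n)) \<longlonglongrightarrow> (INF n. phiU n (x n))"
    by (rule LIMSEQ_decseq_INF[OF _ phiU_decseq[OF x]])
  then show ?thesis unfolding phiU_lim_def by (metis limI)
qed

lemma phiL_le_phiL_lim: "x \<in> X \<Longrightarrow> phiL n (x n) \<le> phiL_lim phiL x"
  using incseq_le[OF phiL_incseq phiL_tendsto] by blast

lemma phiU_lim_le_phiU: "x \<in> X \<Longrightarrow> phiU_lim phiU x \<le> phiU n (x n)"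
  using decseq_ge[OF phiU_decseq phiU_tendsto] by blast

lemma phiL_lim_le_phiU_lim:
  assumes x: "x \<in> X" shows "phiL_lim phiL x \<le> phiU_lim phiU x"
  by (rule LIMSEQ_le[OF phiL_tendsto[OF x] phiU_tendsto[OF x]])
     (use phi_bounds cantor_X_in_V[OF x] in blast)

lemma mem_fence_iff:
  "(x, t) \<in> Fence \<longleftrightarrow> x \<in> X \<and> (\<forall>n. phiL n (x n) \<le> t \<and> t \<le> phiU n (x n))"
proof
  assume "(x, t) \<in> Fence"
  then have x: "x \<in> X" and "phiL_lim phiL x \<le> t" "t \<le> phiU_lim phiU x"
    by (auto simp: fence_def)
  then show "x \<in> X \<and> (\<forall>n. phiL n (x n) \<le> t \<and> t \<le> phiU n (x n))"
    using phiL_le_phiL_lim[OF x] phiU_lim_le_phiU[OF x] by (meson order_trans)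
next
  assume fibre: "x \<in> X \<and> (\<forall>n. phiL n (x n) \<le> t \<and> t \<le> phiU n (x n))"
  then have "phiL_lim phiL x \<le> t" and "t \<le> phiU_lim phiU x"
    by (auto intro: LIMSEQ_le_const2[OF phiL_tendsto] LIMSEQ_le_const[OF phiU_tendsto])
  then show "(x, t) \<in> Fence" using fibre by (simp add: fence_def)
qed

lemma s_n_in_fibre:
  assumes "u \<in> V n" "v \<in> V n" "phiL n u \<le> t" "t \<le> phiU n u"
  shows "phiL n v \<le> s_n phiL phiU n u v t \<and> s_n phiL phiU n u v t \<le> phiU n v"
  using assms phiL_less_phiU less_imp_le by (intro s_n_in_interval) auto

lemma abs_s_n_diff_le_Gamma:
  assumes E': "\<And>k. E' k \<subseteq> V k \<times> V k" and e: "(u, v) \<in> E' n"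
    and e': "(u', v') \<in> E' (Suc n)" "Psi n u' = u" "Psi n v' = v"
    and t: "phiL (Suc n) u' \<le> t" "t \<le> phiU (Suc n) u'"
  shows "\<bar>s_n phiL phiU n u v t - s_n phiL phiU (Suc n) u' v' t\<bar> \<le> Gamma E' Psi phiL phiU n"
proof -
  define S where "S = {\<bar>s_n phiL phiU n u v t - s_n phiL phiU (Suc n) u' v' t\<bar> | u' v' t.
    (u', v') \<in> E' (Suc n) \<and> Psi n u' = u \<and> Psi n v' = v \<and> phiL (Suc n) u' \<le> t \<and> t \<le> phiU (Suc n) u'}"
  have "S \<subseteq> {..1}"
  proof
    fix z assume "z \<in> S"
    then obtain a b r where ab: "(a, b) \<in> E' (Suc n)" "Psi n a = u"
      and r: "phiL (Suc n) a \<le> r" "r \<le> phiU (Suc n) a"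
      and z: "z = \<bar>s_n phiL phiU n u v r - s_n phiL phiU (Suc n) a b r\<bar>"
      unfolding S_def by blast
    have a: "a \<in> V (Suc n)" and b: "b \<in> V (Suc n)" and u: "u \<in> V n" and v: "v \<in> V n"
      using ab(1) e E' by blast+
    have "phiL n u \<le> r" "r \<le> phiU n u" using phi_mono[OF a] ab(2) r by auto
    then show "z \<in> {..1}"
      using s_n_in_fibre[OF u v] s_n_in_fibre[OF a b r] phi_bounds[OF v] phi_bounds[OF b] z
      by fastforce
  qed
  then have "bdd_above S" by (meson bdd_above_Iic bdd_above_mono)
  moreover have "\<bar>s_n phiL phiU n u v t - s_n phiL phiU (Suc n) u' v' t\<bar> \<in> S"
    unfolding S_def using e' t by blast
  ultimately have "\<bar>s_n phiL phiU n u v t - s_n phiL phiU (Suc n) u' v' t\<bar>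
      \<le> Gamma_edge E' Psi phiL phiU n (u, v)"
    unfolding Gamma_edge_def S_def by (simp add: cSup_upper)
  also have "\<dots> \<le> Gamma E' Psi phiL phiU n"
    unfolding Gamma_def using e E' finite_subset[OF E' finite_cartesian_product[OF finite_V finite_V]]
    by simp
  finally show ?thesis .
qed

lemma Gamma_nonneg:
  assumes E': "\<And>k. E' k \<subseteq> V k \<times> V k" and x: "x \<in> X" and y: "y \<in> X"
    and edges: "\<And>k. (x k, y k) \<in> E' k"
  shows "0 \<le> Gamma E' Psi phiL phiU n"
proof -
  have "phiL (Suc n) (x (Suc n)) \<le> phiU (Suc n) (x (Suc n))"
    using phi_bounds[OF cantor_X_in_V[OF x]] by blast
  from abs_s_n_diff_le_Gamma[OF E' edges edges cantor_X_Psi[OF x] cantor_X_Psi[OF y] order_refl this]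
  show ?thesis by linarith
qed

lemma thread_s_n_tail_bound:
  assumes E': "\<And>k. E' k \<subseteq> V k \<times> V k" and summable: "summable (Gamma E' Psi phiL phiU)"
    and x: "x \<in> X" and y: "y \<in> X" and edges: "\<And>k. (x k, y k) \<in> E' k"
    and km: "k \<le> m" and t: "phiL m (x m) \<le> t" "t \<le> phiU m (x m)"
  shows "\<bar>s_n phiL phiU k (x k) (y k) t - s_n phiL phiU m (x m) (y m) t\<bar>
    \<le> (\<Sum>j. Gamma E' Psi phiL phiU (j + k))"
  using phiL_incseq[OF x] phiU_decseq[OF x] _ summable Gamma_nonneg[OF E' x y edges] km t
proof (rule telescoping_tail_bound)
  show "\<bar>s_n phiL phiU n (x n) (y n) t - s_n phiL phiU (Suc n) (x (Suc n)) (y (Suc n)) t\<bar>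
      \<le> Gamma E' Psi phiL phiU n"
    if "phiL (Suc n) (x (Suc n)) \<le> t" "t \<le> phiU (Suc n) (x (Suc n))" for n t
    using abs_s_n_diff_le_Gamma[OF E' edges edges cantor_X_Psi[OF x] cantor_X_Psi[OF y] that] .
qed

abbreviation "V_product_top \<equiv> product_topology (\<lambda>n. discrete_topology (V n)) UNIV"

lemma topspace_X_top: "topspace (X_top V Psi) = X"
  unfolding X_top_def using cantor_X_in_V by (auto simp: PiE_def extensional_def)

lemma topspace_fence_top: "topspace (fence_top V Psi phiL phiU) = Fence"
  unfolding fence_top_def by (auto simp: topspace_X_top fence_def)

lemma continuous_map_coordinate:
  assumes g: "\<And>x. x \<in> X \<Longrightarrow> g (x n) \<in> topspace Y"
  shows "continuous_map (X_top V Psi) Y (\<lambda>x. g (x n))"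
proof -
  have "continuous_map (X_top V Psi) (subtopology (discrete_topology (V n)) ((\<lambda>x. x n) ` X))
      (\<lambda>x. x n)"
    unfolding X_top_def
    by (intro continuous_map_into_subtopology continuous_map_from_subtopology
        continuous_map_product_projection)
       (auto simp: topspace_X_top[unfolded X_top_def])
  moreover have "continuous_map (subtopology (discrete_topology (V n)) ((\<lambda>x. x n) ` X)) Y g"
    using g by auto
  ultimately show ?thesis using continuous_map_compose by (fastforce simp: o_def)
qed

lemma H_locally_determined: "\<exists>n. \<forall>x\<in>X. \<forall>x'\<in>X. x n = x' n \<longrightarrow> H x m = H x' m"
proof -
  obtain n where det:
    "\<forall>g\<in>V n. \<forall>y\<in>X. \<forall>y'\<in>X. (g, y n) \<in> E n \<longrightarrow> (g, y' n) \<in> E n \<longrightarrow> y m = y' m"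
    using successors_eventually_determined[of m] by blast
  have "H x m = H x' m" if x: "x \<in> X" and x': "x' \<in> X" and xx': "x n = x' n" for x x'
  proof -
    have "(x n, H x' n) \<in> E n" using H_edge[OF x', of n] xx' by simp
    then show ?thesis
      using det cantor_X_in_V[OF x] H_in_X[OF x] H_in_X[OF x'] H_edge[OF x, of n] by blast
  qed
  then show ?thesis by blast
qed

lemma continuous_map_H: "continuous_map (X_top V Psi) (X_top V Psi) H"
proof -
  have "continuous_map (X_top V Psi) (discrete_topology (V m)) (\<lambda>x. H x m)" for m
  proof -
    obtain n where n: "\<forall>x\<in>X. \<forall>x'\<in>X. x n = x' n \<longrightarrow> H x m = H x' m"
      using H_locally_determined by blast
    define h where "h g = H (SOME x. x \<in> X \<and> x n = g) m" for g
    have h: "h (x n) = H x m" if "x \<in> X" for x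
      unfolding h_def using someI[of "\<lambda>x'. x' \<in> X \<and> x' n = x n" x] that n by metis
    have "continuous_map (X_top V Psi) (discrete_topology (V m)) (\<lambda>x. h (x n))"
      by (rule continuous_map_coordinate) (simp add: h cantor_X_in_V[OF H_in_X])
    then show ?thesis by (rule continuous_map_eq) (simp add: h topspace_X_top)
  qed
  then have "continuous_map (X_top V Psi) V_product_top H"
    by (simp add: continuous_map_componentwise_UNIV)
  then show ?thesis
    unfolding X_top_def
    by (intro continuous_map_into_subtopology) (use H_in_X topspace_X_top[unfolded X_top_def] in auto)
qed

lemma continuous_map_fence_fst: "continuous_map (fence_top V Psi phiL phiU) (X_top V Psi) fst"
  unfolding fence_top_def by (intro continuous_map_from_subtopology continuous_map_fst)

lemma continuous_map_fence_snd: "continuous_map (fence_top V Psi phiL phiU) euclideanreal snd"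
  unfolding fence_top_def by (intro continuous_map_from_subtopology continuous_map_snd)

lemma continuous_map_fence_coordinate:
  "continuous_map (fence_top V Psi phiL phiU) euclideanreal (\<lambda>p. f (fst p n))"
  using continuous_map_compose[OF continuous_map_fence_fst continuous_map_coordinate[of "\<lambda>v. f v" n]]
  by (simp add: o_def)

lemma continuous_map_fence_H_coordinate:
  "continuous_map (fence_top V Psi phiL phiU) euclideanreal (\<lambda>p. f (H (fst p) n))"
  using continuous_map_compose[OF continuous_map_compose[OF continuous_map_fence_fst continuous_map_H]
      continuous_map_coordinate[of "\<lambda>v. f v" n]]
  by (simp add: o_def)

lemma closedin_X: "closedin V_product_top X"
proof -
  have proj: "continuous_map V_product_top (discrete_topology (V n)) (\<lambda>x. x n)" for n
    by (rule continuous_map_product_projection) simp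
  have "closedin V_product_top {x \<in> topspace V_product_top. Psi n (x (Suc n)) = x n}" for n
  proof (rule closedin_continuous_maps_eq)
    show "continuous_map V_product_top (discrete_topology (V n)) (\<lambda>x. Psi n (x (Suc n)))"
      using continuous_map_compose[OF proj[of "Suc n"], of "discrete_topology (V n)" "Psi n"]
        Psi_image_V by (auto simp: o_def)
  qed (simp_all add: proj)
  moreover have "X = (\<Inter>n. {x \<in> topspace V_product_top. Psi n (x (Suc n)) = x n})"
    by (auto simp: cantor_X_iff PiE_def extensional_def Pi_iff)
  ultimately show ?thesis by auto
qed

lemma compact_space_fence_top: "compact_space (fence_top V Psi phiL phiU)"
proof -
  let ?Q = "prod_topology (X_top V Psi) euclideanreal"
  have "compactin V_product_top X"
    using closedin_compact_space[OF _ closedin_X] finite_V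
    by (simp add: compact_space_product_topology compact_space_discrete_topology)
  then have "compactin ?Q (X \<times> {0..1})"
    unfolding X_top_def by (simp add: compactin_subtopology compactin_Times)
  moreover have "Fence \<subseteq> X \<times> {0..1}"
  proof clarify
    fix x t assume "(x, t) \<in> Fence"
    then have x: "x \<in> X" and "phiL 0 (x 0) \<le> t" "t \<le> phiU 0 (x 0)" by (simp_all add: mem_fence_iff)
    with phi_bounds[OF cantor_X_in_V[OF x, of 0]] show "x \<in> X \<and> t \<in> {0..1}" by simp
  qed
  moreover have "closedin ?Q Fence"
  proof -
    have coord: "continuous_map ?Q euclideanreal (\<lambda>p. f (fst p n))" for f :: "'a \<Rightarrow> real" and n
    proof -
      have "continuous_map (X_top V Psi) euclideanreal (\<lambda>x. f (x n))"
        by (rule continuous_map_coordinate) simp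
      then show ?thesis using continuous_map_compose[OF continuous_map_fst] by (simp add: o_def)
    qed
    let ?C = "\<lambda>n. {p \<in> topspace ?Q. phiL n (fst p n) \<le> snd p} \<inter> {p \<in> topspace ?Q. snd p \<le> phiU n (fst p n)}"
    have "closedin ?Q (?C n)" for n
      by (intro closedin_Int closedin_continuous_maps_le coord continuous_map_snd)
    moreover have "Fence = (\<Inter>n. ?C n)"
      by (force simp: topspace_X_top mem_fence_iff)
    ultimately show ?thesis by auto
  qed
  ultimately have "compactin ?Q Fence" by (rule closed_compactin)
  then show ?thesis unfolding fence_top_def by (rule compact_space_subtopology)
qed

lemma Hausdorff_space_fence_top: "Hausdorff_space (fence_top V Psi phiL phiU)"
  unfolding fence_top_def X_top_def
  by (intro Hausdorff_space_subtopology Hausdorff_space_prod_topology[THEN iffD2] disjI2 conjI)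
     (simp_all add: Hausdorff_space_product_topology)

end

section \<open>The fibre map \<open>s\<close> and the fence map \<open>T\<close>\<close>

locale Gamma_F_system = strict_F_system +
  assumes condition_Gamma: "condition_Gamma E Psi phiL phiU"
begin

abbreviation "s \<equiv> s_lim V E Psi phiL phiU"

definition Gamma_tail :: "nat \<Rightarrow> real" where
  "Gamma_tail k = (\<Sum>j. Gamma E Psi phiL phiU (j + k))"

lemma Gamma_tail_tendsto_0: "Gamma_tail \<longlonglongrightarrow> 0"
  using condition_Gamma unfolding condition_Gamma_def Gamma_tail_def by (rule suminf_exist_split2)

lemma s_n_tail_bound:
  assumes "x \<in> X" "k \<le> m" "phiL m (x m) \<le> t" "t \<le> phiU m (x m)"
  shows "\<bar>s_n phiL phiU k (x k) (H x k) t - s_n phiL phiU m (x m) (H x m) t\<bar> \<le> Gamma_tail k"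
  unfolding Gamma_tail_def
  using edges_subset condition_Gamma[unfolded condition_Gamma_def] assms(1) H_in_X[OF assms(1)]
    H_edge[OF assms(1)] assms(2-)
  by (rule thread_s_n_tail_bound)

lemma
  assumes "(x, t) \<in> Fence"
  shows s_n_tendsto_s: "(\<lambda>k. s_n phiL phiU k (x k) (H x k) t) \<longlonglongrightarrow> s x t"
    and s_n_approx_s: "\<bar>s_n phiL phiU k (x k) (H x k) t - s x t\<bar> \<le> Gamma_tail k"
proof -
  have x: "x \<in> X" and t: "\<And>m. phiL m (x m) \<le> t \<and> t \<le> phiU m (x m)"
    using assms by (simp_all add: mem_fence_iff)
  have "s x t = lim (\<lambda>k. s_n phiL phiU k (x k) (H x k) t)" unfolding s_lim_def ..
  then show "(\<lambda>k. s_n phiL phiU k (x k) (H x k) t) \<longlonglongrightarrow> s x t"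
    and "\<bar>s_n phiL phiU k (x k) (H x k) t - s x t\<bar> \<le> Gamma_tail k"
    using convergent_if_tail_bounded[OF s_n_tail_bound[OF x] Gamma_tail_tendsto_0] t by auto
qed

lemma s_in_fence:
  assumes xt: "(x, t) \<in> Fence" shows "(H x, s x t) \<in> Fence"
proof -
  have x: "x \<in> X" and t: "\<And>m. phiL m (x m) \<le> t \<and> t \<le> phiU m (x m)"
    using xt by (simp_all add: mem_fence_iff)
  have bound: "phiL n (H x n) \<le> s_n phiL phiU m (x m) (H x m) t
      \<and> s_n phiL phiU m (x m) (H x m) t \<le> phiU n (H x n)" if "n \<le> m" for n m
  proof -
    have "phiL m (H x m) \<le> s_n phiL phiU m (x m) (H x m) t
        \<and> s_n phiL phiU m (x m) (H x m) t \<le> phiU m (H x m)"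
      using s_n_in_fibre[OF cantor_X_in_V[OF x] cantor_X_in_V[OF H_in_X[OF x]]] t by blast
    then show ?thesis
      using monoD[OF phiL_incseq[OF H_in_X[OF x]] that] antimonoD[OF phiU_decseq[OF H_in_X[OF x]] that]
      by linarith
  qed
  have "phiL n (H x n) \<le> s x t \<and> s x t \<le> phiU n (H x n)" for n
  proof
    show "phiL n (H x n) \<le> s x t"
      by (rule LIMSEQ_le_const[OF s_n_tendsto_s[OF xt]]) (use bound in blast)
    show "s x t \<le> phiU n (H x n)"
      by (rule LIMSEQ_le_const2[OF s_n_tendsto_s[OF xt]]) (use bound in blast)
  qed
  then show ?thesis using H_in_X[OF x] by (simp add: mem_fence_iff)
qed

lemma s_eq_if_tendsto:
  assumes xt: "(x, t) \<in> Fence"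
    and ts: "\<And>m. phiL m (x m) \<le> ts m \<and> ts m \<le> phiU m (x m)" and ts_lim: "ts \<longlonglongrightarrow> t"
    and lim: "(\<lambda>m. s_n phiL phiU m (x m) (H x m) (ts m)) \<longlonglongrightarrow> \<sigma>"
  shows "s x t = \<sigma>"
proof -
  have x: "x \<in> X" using xt by (simp add: mem_fence_iff)
  have "\<bar>s_n phiL phiU k (x k) (H x k) t - \<sigma>\<bar> \<le> Gamma_tail k" for k
  proof (rule LIMSEQ_le_const2)
    show "(\<lambda>m. \<bar>s_n phiL phiU k (x k) (H x k) (ts m) - s_n phiL phiU m (x m) (H x m) (ts m)\<bar>)
        \<longlonglongrightarrow> \<bar>s_n phiL phiU k (x k) (H x k) t - \<sigma>\<bar>"
      by (intro tendsto_intros tendsto_s_n ts_lim lim)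
    show "\<exists>N. \<forall>m\<ge>N. \<bar>s_n phiL phiU k (x k) (H x k) (ts m) - s_n phiL phiU m (x m) (H x m) (ts m)\<bar>
        \<le> Gamma_tail k"
      using s_n_tail_bound[OF x] ts by blast
  qed
  then have "(\<lambda>k. s_n phiL phiU k (x k) (H x k) t - \<sigma>) \<longlonglongrightarrow> 0"
    by (intro Lim_null_comparison[OF _ Gamma_tail_tendsto_0]) simp
  then have "(\<lambda>k. s_n phiL phiU k (x k) (H x k) t) \<longlonglongrightarrow> \<sigma>"
    by (simp add: LIM_zero_iff)
  with s_n_tendsto_s[OF xt] show ?thesis by (rule LIMSEQ_unique)
qed

lemma s_phiL_lim:
  assumes x: "x \<in> X" shows "s x (phiL_lim phiL x) = phiL_lim phiL (H x)"
proof (rule s_eq_if_tendsto)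
  show "(x, phiL_lim phiL x) \<in> Fence"
    using x phiL_lim_le_phiU_lim[OF x] by (simp add: fence_def)
  show "phiL m (x m) \<le> phiL m (x m) \<and> phiL m (x m) \<le> phiU m (x m)" for m
    using phi_bounds[OF cantor_X_in_V[OF x]] by blast
  show "(\<lambda>m. s_n phiL phiU m (x m) (H x m) (phiL m (x m))) \<longlonglongrightarrow> phiL_lim phiL (H x)"
    unfolding s_n_phiL using phiL_tendsto[OF H_in_X[OF x]] .
qed (rule phiL_tendsto[OF x])

lemma s_phiU_lim:
  assumes x: "x \<in> X" shows "s x (phiU_lim phiU x) = phiU_lim phiU (H x)"
proof (rule s_eq_if_tendsto)
  show "(x, phiU_lim phiU x) \<in> Fence"
    using x phiL_lim_le_phiU_lim[OF x] by (simp add: fence_def)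
  show "phiL m (x m) \<le> phiU m (x m) \<and> phiU m (x m) \<le> phiU m (x m)" for m
    using phi_bounds[OF cantor_X_in_V[OF x]] by blast
  have "s_n phiL phiU m (x m) (H x m) (phiU m (x m)) = phiU m (H x m)" for m
    using phiL_less_phiU[OF cantor_X_in_V[OF x, of m]] by (intro s_n_phiU) simp
  then show "(\<lambda>m. s_n phiL phiU m (x m) (H x m) (phiU m (x m))) \<longlonglongrightarrow> phiU_lim phiU (H x)"
    using phiU_tendsto[OF H_in_X[OF x]] by simp
qed (rule phiU_tendsto[OF x])

lemma continuous_map_s:
  "continuous_map (fence_top V Psi phiL phiU) euclideanreal (\<lambda>p. s (fst p) (snd p))"
proof -
  have "continuous_map (fence_top V Psi phiL phiU) Met_TC.mtopology (\<lambda>p. s (fst p) (snd p))"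
  proof (rule Met_TC.continuous_map_uniform_limit[where F = sequentially])
    have "phiU k (fst p k) - phiL k (fst p k) \<noteq> 0"
      if "p \<in> topspace (fence_top V Psi phiL phiU)" for p k
    proof -
      have "fst p \<in> X" using that by (cases p) (simp add: topspace_fence_top mem_fence_iff)
      from phiL_less_phiU[OF cantor_X_in_V[OF this, of k]] show ?thesis by simp
    qed
    then show "\<forall>\<^sub>F k in sequentially. continuous_map (fence_top V Psi phiL phiU) Met_TC.mtopology
        (\<lambda>p. s_n phiL phiU k (fst p k) (H (fst p) k) (snd p))"
      unfolding s_n_def mtopology_is_euclidean
      by (intro always_eventually allI continuous_intros continuous_map_fence_coordinate
          continuous_map_fence_H_coordinate continuous_map_fence_snd)
         auto
  next
    fix e :: real assume "0 < e"
    with Gamma_tail_tendsto_0 have "\<forall>\<^sub>F k in sequentially. Gamma_tail k < e"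
      by (rule order_tendstoD(2))
    then show "\<forall>\<^sub>F k in sequentially. \<forall>p\<in>topspace (fence_top V Psi phiL phiU).
        s (fst p) (snd p) \<in> UNIV
        \<and> dist (s_n phiL phiU k (fst p k) (H (fst p) k) (snd p)) (s (fst p) (snd p)) < e"
    proof eventually_elim
      case (elim k)
      show ?case
      proof
        fix p assume "p \<in> topspace (fence_top V Psi phiL phiU)"
        then have "(fst p, snd p) \<in> Fence" by (simp add: topspace_fence_top)
        from s_n_approx_s[OF this, of k] elim
        show "s (fst p) (snd p) \<in> UNIV \<and>
            dist (s_n phiL phiU k (fst p k) (H (fst p) k) (snd p)) (s (fst p) (snd p)) < e"
          by (simp add: dist_real_def)
      qed
    qed
  qed simp
  then show ?thesis by simp
qed

definition fence_map :: "(nat \<Rightarrow> 'a) \<times> real \<Rightarrow> (nat \<Rightarrow> 'a) \<times> real" where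
  "fence_map = (\<lambda>(x, t). (H x, s x t))"

lemma fence_map_image: "fence_map ` Fence = Fence"
proof
  show "fence_map ` Fence \<subseteq> Fence"
    using s_in_fence by (auto simp: fence_map_def)
  show "Fence \<subseteq> fence_map ` Fence"
  proof clarify
    fix y t' assume yt': "(y, t') \<in> Fence"
    then have "y \<in> H ` X" by (simp add: H_image mem_fence_iff)
    then obtain x where x: "x \<in> X" and y: "y = H x" by blast
    let ?I = "{phiL_lim phiL x..phiU_lim phiU x}"
    have "continuous_map (top_of_set ?I) (fence_top V Psi phiL phiU) (\<lambda>t. (x, t))"
      unfolding fence_top_def using x
      by (intro continuous_map_into_subtopology continuous_map_pairedI)
         (auto simp: topspace_X_top fence_def continuous_map_from_subtopology)
    from continuous_map_compose[OF this continuous_map_s]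
    have "continuous_on ?I (s x)" by (simp add: o_def)
    then obtain t where "t \<in> ?I" and "s x t = t'"
      using IVT'[of "s x" "phiL_lim phiL x" t' "phiU_lim phiU x"] yt'
        phiL_lim_le_phiU_lim[OF x] s_phiL_lim[OF x] s_phiU_lim[OF x] y
      by (auto simp: fence_def)
    then show "(y, t') \<in> fence_map ` Fence"
      using x y by (force simp: fence_map_def fence_def)
  qed
qed

lemma continuous_map_fence_map:
  "continuous_map (fence_top V Psi phiL phiU) (fence_top V Psi phiL phiU) fence_map"
proof -
  have "continuous_map (fence_top V Psi phiL phiU) (prod_topology (X_top V Psi) euclideanreal)
      (\<lambda>p. (H (fst p), s (fst p) (snd p)))"
    using continuous_map_compose[OF continuous_map_fence_fst continuous_map_H] continuous_map_s
    by (simp add: continuous_map_pairedI o_def)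
  then have "continuous_map (fence_top V Psi phiL phiU) (fence_top V Psi phiL phiU)
      (\<lambda>p. (H (fst p), s (fst p) (snd p)))"
    unfolding fence_top_def[of V Psi phiL phiU]
    by (rule continuous_map_into_subtopology)
       (auto simp: topspace_fence_top[unfolded fence_top_def] intro: s_in_fence)
  then show ?thesis by (simp add: fence_map_def case_prod_beta')
qed

lemma s_n_reverse_tendsto:
  assumes plus: "condition_Gamma_plus E Psi phiL phiU" and xt: "(x, t) \<in> Fence"
  shows "(\<lambda>k. s_n phiL phiU k (H x k) (x k) (s x t)) \<longlonglongrightarrow> t"
proof -
  define E' where "E' n = (E n)\<inverse>" for n
  define R where "R k = (\<Sum>j. Gamma E' Psi phiL phiU (j + k))" for k
  have E': "E' k \<subseteq> V k \<times> V k" for k using edges_subset by (auto simp: E'_def)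
  have summable: "summable (Gamma E' Psi phiL phiU)"
    using plus unfolding condition_Gamma_plus_def Gamma_plus_eq_Gamma_converse E'_def .
  have x: "x \<in> X" and t: "\<And>m. phiL m (x m) \<le> t \<and> t \<le> phiU m (x m)"
    using xt by (simp_all add: mem_fence_iff)
  have Hx: "H x \<in> X" and reverse_edge: "\<And>k. (H x k, x k) \<in> E' k"
    using H_in_X[OF x] H_edge[OF x] by (simp_all add: E'_def)
  have bound: "\<bar>s_n phiL phiU k (H x k) (x k) (s x t) - t\<bar> \<le> R k" for k
  proof (rule LIMSEQ_le_const2)
    show "(\<lambda>m. \<bar>s_n phiL phiU k (H x k) (x k) (s_n phiL phiU m (x m) (H x m) t) - t\<bar>)
        \<longlonglongrightarrow> \<bar>s_n phiL phiU k (H x k) (x k) (s x t) - t\<bar>"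
      using s_n_tendsto_s[OF xt] by (intro tendsto_intros tendsto_s_n)
    have "\<forall>m\<ge>k. \<bar>s_n phiL phiU k (H x k) (x k) (s_n phiL phiU m (x m) (H x m) t) - t\<bar> \<le> R k"
    proof (intro allI impI)
      fix m assume km: "k \<le> m"
      let ?z = "s_n phiL phiU m (x m) (H x m) t"
      have "phiL m (H x m) \<le> ?z \<and> ?z \<le> phiU m (H x m)"
        using s_n_in_fibre[OF cantor_X_in_V[OF x] cantor_X_in_V[OF Hx]] t by blast
      then have "\<bar>s_n phiL phiU k (H x k) (x k) ?z - s_n phiL phiU m (H x m) (x m) ?z\<bar> \<le> R k"
        unfolding R_def using thread_s_n_tail_bound[OF E' summable Hx x reverse_edge km] by blast
      moreover have "s_n phiL phiU m (H x m) (x m) ?z = t"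
        using phiL_less_phiU[OF cantor_X_in_V[OF x, of m]] phiL_less_phiU[OF cantor_X_in_V[OF Hx, of m]]
        by (intro s_n_swap_inverse) simp_all
      ultimately show "\<bar>s_n phiL phiU k (H x k) (x k) ?z - t\<bar> \<le> R k" by simp
    qed
    then show "\<exists>N. \<forall>m\<ge>N. \<bar>s_n phiL phiU k (H x k) (x k) (s_n phiL phiU m (x m) (H x m) t) - t\<bar> \<le> R k"
      by blast
  qed
  have "R \<longlonglongrightarrow> 0" unfolding R_def using summable by (rule suminf_exist_split2)
  then have "(\<lambda>k. s_n phiL phiU k (H x k) (x k) (s x t) - t) \<longlonglongrightarrow> 0"
    by (rule Lim_null_comparison[rotated]) (use bound in simp)
  then show ?thesis by (simp add: LIM_zero_iff)
qed

lemma inj_on_fence_map: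
  assumes plus: "condition_Gamma_plus E Psi phiL phiU" and inj: "inj_on H X"
  shows "inj_on fence_map Fence"
proof (rule inj_onI, clarify)
  fix x t x' t' assume xt: "(x, t) \<in> Fence" and xt': "(x', t') \<in> Fence"
    and eq: "fence_map (x, t) = fence_map (x', t')"
  have H_eq: "H x = H x'" and s_eq: "s x t = s x' t'" using eq by (simp_all add: fence_map_def)
  have "x \<in> X" "x' \<in> X" using xt xt' by (simp_all add: mem_fence_iff)
  with H_eq have "x = x'" using inj_on_eq_iff[OF inj] by blast
  from s_eq \<open>x = x'\<close> have s_eq': "s x t = s x t'" by simp
  have "(\<lambda>k. s_n phiL phiU k (H x k) (x k) (s x t)) \<longlonglongrightarrow> t'"
    using s_n_reverse_tendsto[OF plus xt'] unfolding \<open>x = x'\<close>[symmetric] s_eq'[symmetric] .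
  with s_n_reverse_tendsto[OF plus xt] have "t = t'" by (rule LIMSEQ_unique)
  with \<open>x = x'\<close> show "x = x' \<and> t = t'" by simp
qed

lemma homeomorphic_map_fence_map:
  assumes "condition_Gamma_plus E Psi phiL phiU" and "inj_on H X"
  shows "homeomorphic_map (fence_top V Psi phiL phiU) (fence_top V Psi phiL phiU) fence_map"
proof (rule bijective_closed_imp_homeomorphic_map[OF continuous_map_fence_map])
  show "closed_map (fence_top V Psi phiL phiU) (fence_top V Psi phiL phiU) fence_map"
    by (rule continuous_imp_closed_map[OF continuous_map_fence_map compact_space_fence_top
          Hausdorff_space_fence_top])
qed (simp_all add: topspace_fence_top fence_map_image inj_on_fence_map assms)

end

theorem theorem8p1:
  fixes V :: "nat \<Rightarrow> 'a set" and E :: "nat \<Rightarrow> ('a \<times> 'a) set"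
    and Psi :: "nat \<Rightarrow> 'a \<Rightarrow> 'a" and phiL phiU :: "nat \<Rightarrow> 'a \<Rightarrow> real"
  assumes sys: "F_system V E Psi phiL phiU"
    and strict: "\<And>n v. v \<in> V n \<Longrightarrow> phiL n v < phiU n v"
    and gam: "condition_Gamma E Psi phiL phiU"
  defines "T \<equiv> (\<lambda>(x, t). (H_X V E Psi x, s_lim V E Psi phiL phiU x t))"
  shows "(\<forall>(x, t) \<in> fence V Psi phiL phiU.
            (\<lambda>n. s_n phiL phiU n (x n) (H_X V E Psi x n) t) \<longlonglongrightarrow> s_lim V E Psi phiL phiU x t)
    \<and> T ` fence V Psi phiL phiU = fence V Psi phiL phiU
    \<and> continuous_map (fence_top V Psi phiL phiU) (fence_top V Psi phiL phiU) T
    \<and> (\<forall>p \<in> fence V Psi phiL phiU. fst (T p) = H_X V E Psi (fst p))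
    \<and> ((condition_Gamma_plus E Psi phiL phiU
         \<and> homeomorphic_map (X_top V Psi) (X_top V Psi) (H_X V E Psi))
        \<longrightarrow> homeomorphic_map (fence_top V Psi phiL phiU) (fence_top V Psi phiL phiU) T)"
proof -
  interpret Gamma_F_system V E Psi phiL phiU
    using sys strict gam by unfold_locales
  have T: "T = fence_map" unfolding T_def fence_map_def ..
  have "\<forall>(x, t) \<in> Fence. (\<lambda>n. s_n phiL phiU n (x n) (H x n) t) \<longlonglongrightarrow> s x t"
    using s_n_tendsto_s by blast
  moreover have "\<forall>p \<in> Fence. fst (fence_map p) = H (fst p)"
    by (simp add: fence_map_def case_prod_beta)
  moreover have "homeomorphic_map (fence_top V Psi phiL phiU) (fence_top V Psi phiL phiU) fence_map"
    if "condition_Gamma_plus E Psi phiL phiU" and "homeomorphic_map (X_top V Psi) (X_top V Psi) H"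
    using homeomorphic_imp_injective_map[OF that(2)] homeomorphic_map_fence_map[OF that(1)]
    by (simp add: topspace_X_top)
  ultimately show ?thesis
    unfolding T using fence_map_image continuous_map_fence_map by blast
qed

end
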